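(* For any digraphs $G$ and $H$, there is a homomorphism $G\to\delta H$ if and only if there is a homomorphism $\delta^{-1}G\to H$.
   Context: Digraphs are finite, $G=(V,A)$ with $A\subseteq V\times V$; a homomorphism is an arc-preserving map of vertex sets, and $G\to H$ means a homomorphism from $G$ to $H$ exists. The arc graph of $G=(V,A)$ is $\delta G=(A,\delta A)$ with $\delta A=\{((u,v),(v,w)) : (u,v),(v,w)\in A\}$. For an equivalence $\sim$ on $V(G)$, the quotient $G/{\sim}$ has vertex set the equivalence classes, and $(X,Y)$ is an arc iff some $x\in X$, $y\in Y$ have $(x,y)\in A(G)$. Define $\delta^{-1}G$ as follows: let $V'=\{o_u,t_u : u\in V\}$ (new, distinct symbols), $A'=\{(o_u,t_u): u\in V\}$, let $\sim_0$ be the relation with $t_u\sim_0 o_v$ iff $(u,v)\in A$, let $\sim$ be the smallest equivalence relation on $V'$ containing $\sim_0$, and set $\delta^{-1}G=(V',A')/{\sim}$. *)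

theory Defs
  imports Main
begin

type_synonym 'a digraph = "'a set \<times> ('a \<times> 'a) set"

definition is_digraph :: "'a digraph \<Rightarrow> bool" where
  "is_digraph G \<longleftrightarrow> finite (fst G) \<and> snd G \<subseteq> fst G \<times> fst G"

definition is_hom :: "'a digraph \<Rightarrow> 'b digraph \<Rightarrow> ('a \<Rightarrow> 'b) \<Rightarrow> bool" where
  "is_hom G H f \<longleftrightarrow> (\<forall>v\<in>fst G. f v \<in> fst H) \<and> (\<forall>(u,v)\<in>snd G. (f u, f v) \<in> snd H)"

definition hom_exists :: "'a digraph \<Rightarrow> 'b digraph \<Rightarrow> bool" where
  "hom_exists G H \<longleftrightarrow> (\<exists>f. is_hom G H f)"

definition arc_graph :: "'a digraph \<Rightarrow> ('a \<times> 'a) digraph" where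
  "arc_graph G = (snd G, {((u,v),(v',w)). (u,v) \<in> snd G \<and> (v',w) \<in> snd G \<and> v' = v})"

definition quotient_digraph :: "'a digraph \<Rightarrow> 'a rel \<Rightarrow> 'a set digraph" where
  "quotient_digraph G R = (fst G // R,
     {(X,Y). X \<in> fst G // R \<and> Y \<in> fst G // R \<and> (\<exists>x\<in>X. \<exists>y\<in>Y. (x,y) \<in> snd G)})"

definition equiv_closure :: "'a set \<Rightarrow> 'a rel \<Rightarrow> 'a rel" where
  "equiv_closure V R = Id_on V \<union> (R \<union> R\<inverse>)\<^sup>+"

text \<open>\<delta>^{-1}G: vertex o_u is encoded as (u, False), t_u as (u, True).\<close>
definition inv_arc_graph :: "'a digraph \<Rightarrow> ('a \<times> bool) set digraph" where
  "inv_arc_graph G =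
    (let V' = fst G \<times> (UNIV :: bool set);
         A' = {((u,False),(u,True)) | u. u \<in> fst G};
         sim0 = {((u,True),(v,False)) | u v. (u,v) \<in> snd G}
     in quotient_digraph (V', A') (equiv_closure V' sim0))"

end

theory Submission
  imports Defs
begin

text \<open>
  The digraph \<delta>\<inverse>G is the quotient of the "split" digraph S(G), which has one
  arc o_u \<rightarrow> t_u for every vertex u of G, by the equivalence closure of the gluing relation
  t_u \<sim> o_v for the arcs (u,v) of G.  The proof rests on three observations:
  (1) homomorphisms out of a quotient digraph G/R correspond to homomorphisms out of G that
      are constant on R-classes (universal property of the quotient), and being constant on
      the classes of the equivalence closure of a relation is the same as respecting the
      relation itself;
  (2) a map \<phi> on the vertices o_u, t_u is the same as a map f u = (\<phi> o_u, \<phi> t_u) into pairs;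
  (3) under this correspondence, "\<phi> is a homomorphism S(G) \<rightarrow> H respecting the gluing" says
      exactly that every f u is an arc of H and that f u and f v are consecutive arcs whenever
      (u,v) is an arc of G, i.e. that f is a homomorphism G \<rightarrow> \<delta>H.
\<close>

lemma equiv_closure_equiv:
  assumes "R \<subseteq> V \<times> V"
  shows "equiv V (equiv_closure V R)"
proof -
  have in_V: "(R \<union> R\<inverse>)\<^sup>+ \<subseteq> V \<times> V"
    using assms by (metis converse_subset_swap converse_Times le_sup_iff trancl_subset_Sigma)
  have "sym ((R \<union> R\<inverse>)\<^sup>+)"
    by (simp add: sym_Un_converse sym_trancl)
  then show ?thesis
    unfolding equiv_def equiv_closure_def refl_on_def sym_def trans_def
    using in_V by (auto intro: trancl_trans)
qed

lemma respects_equiv_closure_iff: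
  "\<phi> respects equiv_closure V R \<longleftrightarrow> \<phi> respects R"
proof
  assume "\<phi> respects equiv_closure V R"
  then show "\<phi> respects R"
    unfolding equiv_closure_def congruent_def by auto
next
  assume R: "\<phi> respects R"
  have "\<phi> x = \<phi> y" if "(x, y) \<in> (R \<union> R\<inverse>)\<^sup>+" for x y
    using that by (induction rule: trancl_induct) (use R in \<open>auto simp: congruent_def\<close>)
  then show "\<phi> respects equiv_closure V R"
    unfolding equiv_closure_def congruent_def by auto
qed

lemma class_value:
  assumes "equiv A R" and "\<phi> respects R" and "X \<in> A // R" and "x \<in> X"
  shows "the_elem (\<phi> ` X) = \<phi> x"
proof (rule the_elem_image_unique)
  show "X \<noteq> {}" using \<open>x \<in> X\<close> by blast
  fix y assume "y \<in> X"
  then have "(y, x) \<in> R"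
    using quotient_eq_iff[OF assms(1,3,3) \<open>y \<in> X\<close> assms(4)] by simp
  then show "\<phi> y = \<phi> x" by (rule congruentD[OF assms(2)])
qed

lemma hom_from_quotient_iff:
  assumes R: "equiv (fst G) R" and arcs: "snd G \<subseteq> fst G \<times> fst G"
  shows "hom_exists (quotient_digraph G R) H \<longleftrightarrow> (\<exists>\<phi>. is_hom G H \<phi> \<and> \<phi> respects R)"
proof
  assume "hom_exists (quotient_digraph G R) H"
  then obtain g where g: "is_hom (quotient_digraph G R) H g"
    unfolding hom_exists_def by blast
  define \<phi> where "\<phi> x = g (R `` {x})" for x
  have classes: "R `` {x} \<in> fst G // R" "x \<in> R `` {x}" if "x \<in> fst G" for x
    using quotientI[OF that] equiv_class_self[OF R that] by auto
  have "is_hom G H \<phi>"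
    unfolding is_hom_def
  proof (intro conjI ballI)
    show "\<phi> x \<in> fst H" if "x \<in> fst G" for x
      using g classes[OF that] unfolding is_hom_def quotient_digraph_def \<phi>_def by auto
    fix p assume "p \<in> snd G"
    then obtain x y where p: "p = (x, y)" "(x, y) \<in> snd G" "x \<in> fst G" "y \<in> fst G"
      using arcs by auto
    then have "(R `` {x}, R `` {y}) \<in> snd (quotient_digraph G R)"
      using classes unfolding quotient_digraph_def by auto
    then show "case p of (x, y) \<Rightarrow> (\<phi> x, \<phi> y) \<in> snd H"
      using g p unfolding is_hom_def \<phi>_def by auto
  qed
  moreover have "\<phi> respects R"
    using R by (auto intro!: congruentI simp: \<phi>_def equiv_class_eq)
  ultimately show "\<exists>\<phi>. is_hom G H \<phi> \<and> \<phi> respects R" by blast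
next
  assume "\<exists>\<phi>. is_hom G H \<phi> \<and> \<phi> respects R"
  then obtain \<phi> where \<phi>: "is_hom G H \<phi>" and resp: "\<phi> respects R" by blast
  define g where "g X = the_elem (\<phi> ` X)" for X
  have g: "g X = \<phi> x" if "X \<in> fst G // R" "x \<in> X" for X x
    unfolding g_def using class_value[OF R resp that] .
  have "is_hom (quotient_digraph G R) H g"
    unfolding is_hom_def quotient_digraph_def
  proof (intro conjI ballI; clarsimp)
    fix X assume X: "X \<in> fst G // R"
    then obtain x where "x \<in> fst G" "X = R `` {x}" by (auto elim: quotientE)
    then show "g X \<in> fst H"
      using \<phi> g[OF X] R equiv_class_self unfolding is_hom_def by fastforce
  next
    fix X Y x y assume "X \<in> fst G // R" "Y \<in> fst G // R" "x \<in> X" "y \<in> Y" "(x, y) \<in> snd G"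
    then show "(g X, g Y) \<in> snd H"
      using \<phi> g unfolding is_hom_def by auto
  qed
  then show "hom_exists (quotient_digraph G R) H"
    unfolding hom_exists_def by blast
qed

definition split_digraph :: "'a digraph \<Rightarrow> ('a \<times> bool) digraph" where
  "split_digraph G = (fst G \<times> UNIV, {((u, False), (u, True)) | u. u \<in> fst G})"

definition glue_rel :: "'a digraph \<Rightarrow> ('a \<times> bool) rel" where
  "glue_rel G = {((u, True), (v, False)) | u v. (u, v) \<in> snd G}"

lemma inv_arc_graph_as_quotient:
  "inv_arc_graph G =
     quotient_digraph (split_digraph G) (equiv_closure (fst (split_digraph G)) (glue_rel G))"
  unfolding inv_arc_graph_def split_digraph_def glue_rel_def Let_def by simp

lemma split_digraph_arcs_on_vertices:
  "snd (split_digraph G) \<subseteq> fst (split_digraph G) \<times> fst (split_digraph G)"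
  unfolding split_digraph_def by auto

lemma glue_rel_on_split_vertices:
  assumes "is_digraph G"
  shows "glue_rel G \<subseteq> fst (split_digraph G) \<times> fst (split_digraph G)"
  using assms unfolding is_digraph_def glue_rel_def split_digraph_def by auto

text \<open>Homomorphisms S(G) \<rightarrow> H send each arc o_u \<rightarrow> t_u to an arc of H; endpoints are
  automatically vertices since every vertex of S(G) lies on such an arc.\<close>
lemma split_hom_iff:
  assumes "is_digraph H"
  shows "is_hom (split_digraph G) H \<phi> \<longleftrightarrow> (\<forall>u\<in>fst G. (\<phi> (u, False), \<phi> (u, True)) \<in> snd H)"
proof -
  have "\<phi> (u, b) \<in> fst H" if "(\<phi> (u, False), \<phi> (u, True)) \<in> snd H" for u b
    using that assms unfolding is_digraph_def by (cases b) auto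
  then show ?thesis
    unfolding is_hom_def split_digraph_def by auto
qed

lemma glue_respects_iff:
  "\<phi> respects glue_rel G \<longleftrightarrow> (\<forall>(u, v)\<in>snd G. \<phi> (u, True) = \<phi> (v, False))"
  unfolding glue_rel_def congruent_def by auto

lemma arc_graph_hom_iff:
  assumes "snd G \<subseteq> fst G \<times> fst G"
  shows "is_hom G (arc_graph H) f \<longleftrightarrow>
           (\<forall>u\<in>fst G. f u \<in> snd H) \<and> (\<forall>(u, v)\<in>snd G. snd (f u) = fst (f v))"
proof -
  have consecutive: "(f u, f v) \<in> snd (arc_graph H) \<longleftrightarrow>
                       f u \<in> snd H \<and> f v \<in> snd H \<and> snd (f u) = fst (f v)" for u v
    by (cases "f u"; cases "f v") (auto simp: arc_graph_def)
  have "fst (arc_graph H) = snd H"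
    by (simp add: arc_graph_def)
  then show ?thesis
    using assms unfolding is_hom_def consecutive by blast
qed

lemma ex_pair_valued_map:
  "(\<exists>\<phi>. P (\<lambda>u. (\<phi> (u, False), \<phi> (u, True)))) \<longleftrightarrow> (\<exists>f. P f)"
proof
  assume "\<exists>f. P f"
  then obtain f where "P f" ..
  define \<phi> where "\<phi> = (\<lambda>(u, b). if b then snd (f u) else fst (f u))"
  have "(\<lambda>u. (\<phi> (u, False), \<phi> (u, True))) = f"
    by (simp add: \<phi>_def)
  with \<open>P f\<close> show "\<exists>\<phi>. P (\<lambda>u. (\<phi> (u, False), \<phi> (u, True)))"
    by auto
qed blast

theorem proposition2p1:
  fixes G :: "'a digraph" and H :: "'b digraph"
  assumes "is_digraph G" and "is_digraph H"
  shows "hom_exists G (arc_graph H) \<longleftrightarrow> hom_exists (inv_arc_graph G) H"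
proof -
  let ?S = "split_digraph G"
  have G_arcs: "snd G \<subseteq> fst G \<times> fst G"
    using assms(1) unfolding is_digraph_def by simp
  have "hom_exists (inv_arc_graph G) H \<longleftrightarrow>
          (\<exists>\<phi>. is_hom ?S H \<phi> \<and> \<phi> respects equiv_closure (fst ?S) (glue_rel G))"
    unfolding inv_arc_graph_as_quotient
    by (intro hom_from_quotient_iff split_digraph_arcs_on_vertices
          equiv_closure_equiv glue_rel_on_split_vertices assms(1))
  also have "\<dots> \<longleftrightarrow> (\<exists>\<phi>. is_hom ?S H \<phi> \<and> \<phi> respects glue_rel G)"
    by (simp only: respects_equiv_closure_iff)
  also have "\<dots> \<longleftrightarrow> (\<exists>\<phi>. is_hom G (arc_graph H) (\<lambda>u. (\<phi> (u, False), \<phi> (u, True))))"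
    by (simp add: split_hom_iff[OF assms(2)] glue_respects_iff arc_graph_hom_iff[OF G_arcs])
  also have "\<dots> \<longleftrightarrow> hom_exists G (arc_graph H)"
    unfolding ex_pair_valued_map hom_exists_def ..
  finally show ?thesis by blast
qed

end
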